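(* Let $A=(a(x),dF(x))$ and $B=(b(x),dF(x))$ be games and $p\in[0,1]$. If $g(p)$ exists, then $f(p)\le g(p)$.
   Context: A game is a pair $(a(x),dF(x))$ with $dF$ a probability measure on $\mathbb{R}$ and $a\ge0$ measurable with finite positive integral. A real $r$ is fixed; $\exp(-\infty)=0$. For $p\in[0,1]$ put $c_p(x):=pa(x)+(1-p)b(x)$ and $f(p):=\exp(\int\log c_p(x)\,dF(x))/e^r$. $g(p)$ denotes the value $u>0$ such that for some $t_u$ (with $0<t_u\le1$) the system $\exp\big(\int\log(\frac{c_p(x)}{u}t_u-t_u+1)\,dF(x)\big)=e^r$, $\int\frac{c_p(x)-u}{c_p(x)t_u-ut_u+u}\,dF(x)=0$ holds; when such a solution exists it is unique, and "$g(p)$ exists" means such a solution exists. *)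

theory Defs
  imports "HOL-Probability.Probability"
begin

definition game :: "real measure \<Rightarrow> (real \<Rightarrow> real) \<Rightarrow> bool" where
  "game M a \<longleftrightarrow> prob_space M \<and> sets M = sets borel \<and>
     a \<in> borel_measurable M \<and> (\<forall>x. 0 \<le> a x) \<and>
     integrable M a \<and> 0 < integral\<^sup>L M a"

text \<open>Extended-real valued integral: positive part minus negative part
  (the integral of log can be -\<infinity>).\<close>
definition eint :: "real measure \<Rightarrow> (real \<Rightarrow> ereal) \<Rightarrow> ereal" where
  "eint M h = enn2ereal (\<integral>\<^sup>+ x. e2ennreal (max 0 (h x)) \<partial>M)
            - enn2ereal (\<integral>\<^sup>+ x. e2ennreal (max 0 (- h x)) \<partial>M)"

definition eln :: "real \<Rightarrow> ereal" where
  "eln y = (if 0 < y then ereal (ln y) else -\<infinity>)"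

definition eexp :: "ereal \<Rightarrow> ereal" where
  "eexp z = (case z of ereal y \<Rightarrow> ereal (exp y) | PInfty \<Rightarrow> \<infinity> | MInfty \<Rightarrow> 0)"

definition cmix :: "(real \<Rightarrow> real) \<Rightarrow> (real \<Rightarrow> real) \<Rightarrow> real \<Rightarrow> real \<Rightarrow> real" where
  "cmix a b p x = p * a x + (1 - p) * b x"

definition fval :: "real measure \<Rightarrow> (real \<Rightarrow> real) \<Rightarrow> (real \<Rightarrow> real) \<Rightarrow> real \<Rightarrow> real \<Rightarrow> ereal" where
  "fval M a b r p = eexp (eint M (\<lambda>x. eln (cmix a b p x))) / ereal (exp r)"

text \<open>The integrand (c - u)/(c t - u t + u); the denominator vanishes only
  when t = 1 and c = 0, where the value is the limit -\<infinity>.\<close>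
definition gquot :: "real \<Rightarrow> real \<Rightarrow> real \<Rightarrow> ereal" where
  "gquot c u t = (let d = c * t - u * t + u in
      if 0 < d then ereal ((c - u) / d) else -\<infinity>)"

text \<open>u (with witness t_u) solves the system defining g(p).\<close>
definition gsolves :: "real measure \<Rightarrow> (real \<Rightarrow> real) \<Rightarrow> (real \<Rightarrow> real) \<Rightarrow> real \<Rightarrow> real \<Rightarrow> real \<Rightarrow> real \<Rightarrow> bool" where
  "gsolves M a b r p u t \<longleftrightarrow> 0 < u \<and> 0 < t \<and> t \<le> 1 \<and>
     eexp (eint M (\<lambda>x. eln (cmix a b p x / u * t - t + 1))) = ereal (exp r) \<and>
     eint M (\<lambda>x. gquot (cmix a b p x) u t) = 0"

end

theory Submission imports Defs begin

text \<open>Write \<open>c = c\<^sub>p\<close> and \<open>h = c t/u - t + 1\<close>, so that \<open>u h = c t - u t + u\<close>.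
  The tangent-line bound \<open>ln y \<le> y - 1\<close> at \<open>y = c/(u h)\<close> gives pointwise
  \<open>ln c \<le> ln u + ln h + (1 - t) (c - u)/(u h)\<close>, since \<open>c - u h = (1 - t)(c - u)\<close>.
  Integrating against \<open>dF\<close>, the two equations defining \<open>g(p)\<close> say that the second term
  integrates to \<open>r\<close> and the third to \<open>0\<close>; hence \<open>\<integral> ln c dF \<le> ln u + r\<close>, i.e.
  \<open>f(p) \<le> u\<close>.\<close>

lemma e2ennreal_max_0_ereal: "e2ennreal (max 0 (ereal y)) = ennreal y"
  by (metis e2ennreal_ereal ennreal_max_0 max_def zero_ereal_def ereal_less_eq(3))

lemma eint_ereal:
  assumes "integrable M g"
  shows "eint M (\<lambda>x. ereal (g x)) = ereal (integral\<^sup>L M g)"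
proof -
  obtain r q where "0 \<le> r" "0 \<le> q"
    "(\<integral>\<^sup>+x. ennreal (g x) \<partial>M) = ennreal r" "(\<integral>\<^sup>+x. ennreal (- g x) \<partial>M) = ennreal q"
    "integral\<^sup>L M g = r - q"
    using integrableE[OF assms] by metis
  moreover have "\<And>x. - ereal (g x) = ereal (- g x)" by simp
  ultimately show ?thesis
    unfolding eint_def by (simp only: e2ennreal_max_0_ereal) simp
qed

lemma eint_mono_AE:
  assumes "AE x in M. f x \<le> g x"
  shows "eint M f \<le> eint M g"
proof -
  have "(\<integral>\<^sup>+ x. e2ennreal (max 0 (f x)) \<partial>M) \<le> (\<integral>\<^sup>+ x. e2ennreal (max 0 (g x)) \<partial>M)"
    and "(\<integral>\<^sup>+ x. e2ennreal (max 0 (- g x)) \<partial>M) \<le> (\<integral>\<^sup>+ x. e2ennreal (max 0 (- f x)) \<partial>M)"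
    by (rule nn_integral_mono_AE,
        use assms in \<open>auto elim!: eventually_mono intro!: e2ennreal_mono max.mono\<close>)+
  then show ?thesis
    unfolding eint_def
    by (intro ereal_minus_mono) (simp_all add: less_eq_ennreal.rep_eq[symmetric])
qed

lemma eint_eq_ereal_finite_integrable:
  assumes f_meas: "f \<in> borel_measurable M" and "eint M f = ereal r"
  shows "AE x in M. \<bar>f x\<bar> \<noteq> \<infinity>"
    and "integrable M (\<lambda>x. real_of_ereal (f x))"
    and "integral\<^sup>L M (\<lambda>x. real_of_ereal (f x)) = r"
proof -
  define P where "P = (\<integral>\<^sup>+ x. e2ennreal (max 0 (f x)) \<partial>M)"
  define N where "N = (\<integral>\<^sup>+ x. e2ennreal (max 0 (- f x)) \<partial>M)"
  have "enn2ereal P - enn2ereal N = ereal r"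
    using assms(2) unfolding eint_def P_def N_def by simp
  then obtain p q where pq: "P = ennreal p" "N = ennreal q" "0 \<le> p" "0 \<le> q" "p - q = r"
    by (cases P rule: ennreal_cases; cases N rule: ennreal_cases) auto
  have "AE x in M. e2ennreal (max 0 (f x)) \<noteq> \<infinity>"
    by (rule nn_integral_noteq_infinite) (use f_meas pq P_def in simp_all)
  moreover have "AE x in M. e2ennreal (max 0 (- f x)) \<noteq> \<infinity>"
    by (rule nn_integral_noteq_infinite) (use f_meas pq N_def in simp_all)
  ultimately show finite: "AE x in M. \<bar>f x\<bar> \<noteq> \<infinity>"
    by eventually_elim (auto simp: e2ennreal_infty)
  have pos: "(\<integral>\<^sup>+ x. ennreal (real_of_ereal (f x)) \<partial>M) = P" unfolding P_def
    by (rule nn_integral_cong_AE)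
      (use finite in \<open>eventually_elim, auto simp: e2ennreal_max_0_ereal\<close>)
  have neg: "(\<integral>\<^sup>+ x. ennreal (- real_of_ereal (f x)) \<partial>M) = N" unfolding N_def
    by (rule nn_integral_cong_AE)
      (use finite in \<open>eventually_elim, auto simp: e2ennreal_max_0_ereal\<close>)
  show int: "integrable M (\<lambda>x. real_of_ereal (f x))"
    unfolding real_integrable_def using f_meas pos neg pq by simp
  show "integral\<^sup>L M (\<lambda>x. real_of_ereal (f x)) = r"
    using real_lebesgue_integral_def[OF int] pos neg pq by simp
qed

lemma eln_measurable[measurable]: "eln \<in> borel_measurable borel"
  unfolding eln_def by measurable

lemma gquot_measurable[measurable]:
  assumes [measurable]: "f \<in> borel_measurable M"
  shows "(\<lambda>x. gquot (f x) u t) \<in> borel_measurable M"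
  unfolding gquot_def Let_def by measurable

lemma eexp_eq_ereal_exp_iff: "eexp z = ereal (exp r) \<longleftrightarrow> z = ereal r"
  by (cases z) (auto simp: eexp_def)

lemma eexp_div_exp_le:
  assumes "z \<le> ereal (ln u + r)" and "0 < u"
  shows "eexp z / ereal (exp r) \<le> ereal u"
proof (cases z)
  case (real y)
  have "exp y \<le> exp (ln u + r)"
    using real assms(1) by simp
  then show ?thesis
    using real assms(2) by (simp add: eexp_def exp_add divide_le_eq)
qed (use assms in \<open>auto simp: eexp_def\<close>)

lemma ln_le_ln_add_tangent:
  fixes c u t :: real
  defines "d \<equiv> c * t - u * t + u"
  assumes "0 < c" and "0 < u" and "0 < d"
  shows "ln c \<le> ln u + ln (d / u) + (1 - t) * ((c - u) / d)"
proof -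
  have "ln (c / d) \<le> c / d - 1"
    using assms by (intro ln_le_minus_one) simp
  also have "\<dots> = (1 - t) * ((c - u) / d)"
    using \<open>0 < d\<close> unfolding d_def by (simp add: field_simps)
  finally show ?thesis
    using assms by (simp add: ln_div)
qed

lemma eln_le_gquot_bound:
  fixes c u t :: real
  defines "h \<equiv> c / u * t - t + 1"
  assumes "0 \<le> c" and "0 < u" and "0 < h"
  shows "eln c \<le> ereal (ln u + real_of_ereal (eln h) + (1 - t) * real_of_ereal (gquot c u t))"
proof (cases "c = 0")
  case False
  have d: "c * t - u * t + u = u * h"
    using \<open>0 < u\<close> unfolding h_def by (simp add: field_simps)
  have "ln c \<le> ln u + ln (u * h / u) + (1 - t) * ((c - u) / (u * h))"
    using ln_le_ln_add_tangent[where c = c and u = u and t = t] False assms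
    by (simp only: d) simp
  then show ?thesis
    using False assms by (simp add: eln_def gquot_def d)
qed (simp add: eln_def)

lemma eint_eln_le_of_gsystem:
  fixes M :: "real measure"
  assumes "prob_space M" and [measurable]: "c \<in> borel_measurable M"
    and c_nonneg: "\<And>x. 0 \<le> c x" and "0 < u"
    and log_eq: "eint M (\<lambda>x. eln (c x / u * t - t + 1)) = ereal r"
    and quot_eq: "eint M (\<lambda>x. gquot (c x) u t) = 0"
  shows "eint M (\<lambda>x. eln (c x)) \<le> ereal (ln u + r)"
proof -
  define L where "L x = real_of_ereal (eln (c x / u * t - t + 1))" for x
  define Q where "Q x = real_of_ereal (gquot (c x) u t)" for x
  have "(\<lambda>x. eln (c x / u * t - t + 1)) \<in> borel_measurable M"
    and "(\<lambda>x. gquot (c x) u t) \<in> borel_measurable M"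
    by measurable
  note log_int = eint_eq_ereal_finite_integrable[OF this(1) log_eq, folded L_def]
    and quot_int = eint_eq_ereal_finite_integrable[OF this(2) quot_eq[unfolded zero_ereal_def], folded Q_def]
  have "AE x in M. eln (c x) \<le> ereal (ln u + L x + (1 - t) * Q x)"
    using log_int(1)
  proof eventually_elim
    case (elim x)
    then have "0 < c x / u * t - t + 1"
      by (auto simp: eln_def split: if_splits)
    then show ?case
      unfolding L_def Q_def using eln_le_gquot_bound c_nonneg \<open>0 < u\<close> by blast
  qed
  then have "eint M (\<lambda>x. eln (c x)) \<le> eint M (\<lambda>x. ereal (ln u + L x + (1 - t) * Q x))"
    by (rule eint_mono_AE)
  also have "\<dots> = ereal (ln u + r)"
  proof -
    interpret prob_space M by fact
    have "integrable M (\<lambda>x. ln u + L x + (1 - t) * Q x)"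
      using log_int(2) quot_int(2) by auto
    then show ?thesis
      using log_int(2,3) quot_int(2,3) by (simp add: eint_ereal prob_space)
  qed
  finally show ?thesis .
qed

theorem lemmaD6:
  fixes M :: "real measure" and a b :: "real \<Rightarrow> real" and r p u t :: real
  assumes "game M a" and "game M b"
    and "0 \<le> p" and "p \<le> 1"
    and "gsolves M a b r p u t"
  shows "fval M a b r p \<le> ereal u"
proof -
  have [measurable]: "a \<in> borel_measurable M" "b \<in> borel_measurable M"
    using assms(1,2) by (auto simp: game_def)
  have "0 \<le> cmix a b p x" for x
    using assms(1-4) by (auto simp: game_def cmix_def)
  moreover have "0 < u"
    and "eint M (\<lambda>x. eln (cmix a b p x / u * t - t + 1)) = ereal r"
    and "eint M (\<lambda>x. gquot (cmix a b p x) u t) = 0"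
    using assms(5) by (auto simp: gsolves_def eexp_eq_ereal_exp_iff)
  ultimately have "eint M (\<lambda>x. eln (cmix a b p x)) \<le> ereal (ln u + r)"
    using assms(1) by (intro eint_eln_le_of_gsystem) (auto simp: game_def cmix_def)
  then show ?thesis
    unfolding fval_def using \<open>0 < u\<close> by (rule eexp_div_exp_le)
qed

end
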